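(* For $d\in D$ let $d'=d+1/(2N)$ if $d<1/2$, $d'=d$ if $d=1/2$, $d'=d-1/(2N)$ if $d>1/2$, and $f(d)=d'(1-d')$. Then $\sum_{d\in D}f(d)=\frac N6+\frac14-\frac1{6N}$. Moreover, if $T\ge \frac23N^3+N^2-\frac23N$, then for every mixed strategy $\tau$ of the rainmaker, the forecaster strategy $c_t=$ rounding of $p_t=\mathbb P_\tau[a_t=1\mid h_{t-1}]$ to the nearest point of $D$ (fixed tie-breaking) satisfies $\mathbb E[K_T]\le 1/N$.
   Context: Forecasting game: fix a positive integer $N$, the grid $D=\{1/(2N),3/(2N),\dots,(2N-1)/(2N)\}\subset[0,1]$ (which has $N$ points), and a horizon $T$. In each period $t=1,\dots,T$ the rainmaker chooses the weather $a_t\in\{0,1\}$ (1 = rain) and the forecaster chooses a forecast $c_t\in D$; both players have perfect recall, i.e. each may condition its period-$t$ choice on the full history $h_{t-1}=(a_1,c_1,\dots,a_{t-1},c_{t-1})\in(\{0,1\}\times D)^{t-1}$. A pure strategy of a player is a map from histories to its choice set; a mixed strategy is a probability distribution over its (finitely many) pure strategies. For $d\in D$ let $n(d)=\sum_{t=1}^T \mathbf 1_{c_t=d}$ and, when $n(d)>0$, $\bar a(d)=\frac{1}{n(d)}\sum_{t=1}^T\mathbf 1_{c_t=d}\,a_t$. The calibration score is $K_T=\sum_{d\in D}\frac{n(d)}{T}\,|\bar a(d)-d|$ (terms with $n(d)=0$ are $0$); equivalently $K_T=\frac1T\sum_{d\in D}\big|\sum_{t=1}^T\mathbf 1_{c_t=d}(a_t-d)\big|$.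 Expectations are over the random choices of both players. *)

theory Defs
  imports "HOL-Probability.Probability"
begin

definition grid :: "nat \<Rightarrow> real set" where
  "grid N = {(2 * real k + 1) / (2 * real N) | k. k < N}"

definition shiftd :: "nat \<Rightarrow> real \<Rightarrow> real" where
  "shiftd N d = (if d < 1/2 then d + 1 / (2 * real N)
                 else if d = 1/2 then d else d - 1 / (2 * real N))"

definition fd :: "nat \<Rightarrow> real \<Rightarrow> real" where
  "fd N d = shiftd N d * (1 - shiftd N d)"

text \<open>Histories: lists of (weather, forecast); weather True = rain (a_t = 1).\<close>
type_synonym history = "(bool \<times> real) list"

definition consistent :: "(history \<Rightarrow> bool) \<Rightarrow> history \<Rightarrow> bool" where
  "consistent \<sigma> h \<longleftrightarrow> (\<forall>i<length h. fst (h ! i) = \<sigma> (take i h))"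

text \<open>p_t = P_tau[a_t = 1 | h_{t-1}] (forecaster deterministic; value 0 on
  null histories, which is irrelevant).\<close>
definition rain_prob :: "(history \<Rightarrow> bool) pmf \<Rightarrow> history \<Rightarrow> real" where
  "rain_prob \<tau> h =
     measure_pmf.prob \<tau> {\<sigma>. consistent \<sigma> h \<and> \<sigma> h} / measure_pmf.prob \<tau> {\<sigma>. consistent \<sigma> h}"

fun play :: "(history \<Rightarrow> bool) \<Rightarrow> (history \<Rightarrow> real) \<Rightarrow> nat \<Rightarrow> history" where
  "play \<sigma> \<phi> 0 = []"
| "play \<sigma> \<phi> (Suc t) = play \<sigma> \<phi> t @ [(\<sigma> (play \<sigma> \<phi> t), \<phi> (play \<sigma> \<phi> t))]"

definition calib :: "nat \<Rightarrow> nat \<Rightarrow> history \<Rightarrow> real" where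
  "calib N T h = (1 / real T) *
     (\<Sum>d\<in>grid N. \<bar>\<Sum>t<T. if snd (h ! t) = d then of_bool (fst (h ! t)) - d else 0\<bar>)"

definition nearest_rounding :: "nat \<Rightarrow> (real \<Rightarrow> real) \<Rightarrow> bool" where
  "nearest_rounding N r \<longleftrightarrow> (\<forall>p. r p \<in> grid N \<and> (\<forall>d\<in>grid N. \<bar>p - r p\<bar> \<le> \<bar>p - d\<bar>))"

end

theory Submission
  imports Defs
begin

text \<open>Write p_t for the conditional probability of rain given the history and c_t for its
  rounding, so that |p_t - c_t| \<le> 1/(2N). For each d the sum M_d of the innovations a_t - p_t over
  the periods with c_t = d is a martingale, so E[M_d^2] is the expected sum of the conditional
  variances p_t(1 - p_t) over those periods; each of them is at most f(d), because d' is the point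
  of the rounding cell of d closest to 1/2. Hence E|M_d| \<le> sqrt(f(d) E n(d)) \<le> N f(d) + E n(d)/(4N).
  The rounding error adds at most 1/(2N) to K_T, so E K_T \<le> N (\<Sum>d. f(d)) / T + 3/(4N), and the
  closed form of \<Sum>d. f(d) turns the hypothesis on T into T \<ge> 4N^2 \<Sum>d. f(d).\<close>

lemma integrable_measure_pmf_bounded:
  fixes f :: "'a \<Rightarrow> real"
  assumes "\<And>x. \<bar>f x\<bar> \<le> B"
  shows "integrable (measure_pmf p) f"
  by (rule measure_pmf.integrable_const_bound[where B=B]) (use assms in auto)

lemma expectation_bind_pmf_bounded:
  fixes g :: "'b \<Rightarrow> real"
  assumes "\<And>x. \<bar>g x\<bar> \<le> B"
  shows "measure_pmf.expectation (bind_pmf p f) g =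
         measure_pmf.expectation p (\<lambda>x. measure_pmf.expectation (f x) g)"
  unfolding measure_pmf_bind
proof (rule integral_bind[where K="count_space UNIV" and B=B and B'=1])
  show "(\<lambda>x. measure_pmf (f x)) \<in> measurable (measure_pmf p) (subprob_algebra (count_space UNIV))"
    using measurable_measure_pmf[of f] by (simp add: measurable_cong_sets)
qed (use assms in \<open>simp_all add: measure_pmf.emeasure_space_1\<close>)

lemma expectation_abs_squared_le:
  fixes f :: "'a \<Rightarrow> real"
  assumes bounded: "\<And>x. \<bar>f x\<bar> \<le> B"
  shows "(measure_pmf.expectation p (\<lambda>x. \<bar>f x\<bar>))\<^sup>2 \<le> measure_pmf.expectation p (\<lambda>x. (f x)\<^sup>2)"
proof -
  have "integrable (measure_pmf p) (\<lambda>x. \<bar>f x\<bar>)"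
    by (rule integrable_measure_pmf_bounded[where B=B]) (use bounded in simp)
  moreover have "integrable (measure_pmf p) (\<lambda>x. \<bar>f x\<bar>\<^sup>2)"
    by (rule integrable_measure_pmf_bounded[where B="B\<^sup>2"])
       (use power_mono[OF bounded abs_ge_zero, of _ 2] in simp)
  ultimately have "measure_pmf.variance p (\<lambda>x. \<bar>f x\<bar>) =
      measure_pmf.expectation p (\<lambda>x. (f x)\<^sup>2) - (measure_pmf.expectation p (\<lambda>x. \<bar>f x\<bar>))\<^sup>2"
    by (simp add: measure_pmf.variance_eq)
  with measure_pmf.variance_positive[of p "\<lambda>x. \<bar>f x\<bar>"] show ?thesis by simp
qed

lemma four_mult_le_add_square:
  fixes x y :: real
  shows "4 * x * y \<le> (x + y)\<^sup>2"
  using zero_le_power2[of "x - y"] by (simp add: power2_eq_square algebra_simps)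

definition grid_point :: "nat \<Rightarrow> nat \<Rightarrow> real" where
  "grid_point N k = (2 * real k + 1) / (2 * real N)"

lemma grid_eq_image: "grid N = grid_point N ` {..<N}"
  unfolding grid_def grid_point_def by auto

lemma inj_on_grid_point: "inj_on (grid_point N) {..<N}"
  by (auto simp: inj_on_def grid_point_def)

lemma finite_grid: "finite (grid N)"
  unfolding grid_eq_image by simp

lemma sum_grid: "(\<Sum>d\<in>grid N. g d) = (\<Sum>k<N. g (grid_point N k))"
  unfolding grid_eq_image by (rule sum.reindex[OF inj_on_grid_point, unfolded comp_def])

lemma grid_subset_unit_interval: "grid N \<subseteq> {0..1}"
  unfolding grid_eq_image grid_point_def by (auto simp: field_simps)

lemma shiftd_grid_point:
  assumes "k < N"
  shows "shiftd N (grid_point N k) =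
    (if 2 * k + 1 < N then real (k + 1) / real N else if 2 * k + 1 = N then 1 / 2 else real k / real N)"
  using assms by (auto simp: shiftd_def grid_point_def field_simps)

lemma fd_grid_point_lower:
  assumes "2 * k + 1 < N"
  shows "fd N (grid_point N k) = (1 + real k) * (real N - 1 - real k) / (real N)\<^sup>2"
  using assms by (simp add: fd_def shiftd_grid_point field_simps power2_eq_square)

lemma fd_grid_point_upper:
  assumes "N < 2 * k + 1" "k < N"
  shows "fd N (grid_point N k) = real k * (real N - real k) / (real N)\<^sup>2"
  using assms by (simp add: fd_def shiftd_grid_point field_simps power2_eq_square)

lemma fd_grid_point_middle: "2 * k + 1 = N \<Longrightarrow> fd N (grid_point N k) = 1 / 4"
  by (simp add: fd_def shiftd_grid_point)

lemma sum_affine_product: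
  "(\<Sum>i<n. (a + real i) * (b - real i)) =
   real n * a * b + (b - a) * real n * (real n - 1) / 2 - (real n - 1) * real n * (2 * real n - 1) / 6"
  by (induction n) (simp_all add: field_simps power2_eq_square)

lemma sum_fd_grid:
  assumes "N > 0"
  shows "(\<Sum>d\<in>grid N. fd N d) = real N / 6 + 1 / 4 - 1 / (6 * real N)"
proof -
  define m where "m = N div 2"
  have split: "{..<N} = {..<m} \<union> {m..<N - m} \<union> {N - m..<N}"
    unfolding m_def by auto
  have lower: "(\<Sum>k<m. fd N (grid_point N k)) =
      (\<Sum>i<m. (1 + real i) * (real N - 1 - real i)) / (real N)\<^sup>2"
    unfolding sum_divide_distrib by (rule sum.cong) (auto simp: m_def fd_grid_point_lower)
  have "(\<Sum>k\<in>{N - m..<N}. fd N (grid_point N k)) = (\<Sum>i<m. fd N (grid_point N (N - m + i)))"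
    by (rule sum.reindex_bij_witness[where j="\<lambda>k. k - (N - m)" and i="\<lambda>i. N - m + i"])
       (auto simp: m_def)
  also have "\<dots> = (\<Sum>i<m. (real (N - m) + real i) * (real m - real i)) / (real N)\<^sup>2"
    unfolding sum_divide_distrib
    by (rule sum.cong) (auto simp: m_def fd_grid_point_upper)
  finally have upper: "(\<Sum>k\<in>{N - m..<N}. fd N (grid_point N k)) = \<dots>" .
  have middle: "(\<Sum>k\<in>{m..<N - m}. fd N (grid_point N k)) = (if even N then 0 else 1 / 4)"
  proof (cases "even N")
    case False
    then have "{m..<N - m} = {m}" unfolding m_def by (auto elim!: oddE)
    with False show ?thesis by (simp add: fd_grid_point_middle m_def)
  qed (auto simp: m_def)
  have "(\<Sum>d\<in>grid N. fd N d) = (\<Sum>k<m. fd N (grid_point N k))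
      + (\<Sum>k\<in>{m..<N - m}. fd N (grid_point N k)) + (\<Sum>k\<in>{N - m..<N}. fd N (grid_point N k))"
    unfolding sum_grid split by (subst sum.union_disjoint, auto simp: m_def)+
  also have "\<dots> = ((\<Sum>i<m. (1 + real i) * (real N - 1 - real i))
      + (\<Sum>i<m. (real (N - m) + real i) * (real m - real i))) / (real N)\<^sup>2
      + (if even N then 0 else 1 / 4)"
    unfolding lower middle upper by (simp add: add_divide_distrib)
  also have "(\<Sum>i<m. (1 + real i) * (real N - 1 - real i))
      + (\<Sum>i<m. (real (N - m) + real i) * (real m - real i))
      = (real N ^ 3 - real N) / 6 + (if even N then (real N)\<^sup>2 / 4 else 0)"
  proof (cases "even N")
    case True
    then have "real N = 2 * real m" "real (N - m) = real m" unfolding m_def by auto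
    with True show ?thesis
      unfolding sum_affine_product by (simp add: field_simps power2_eq_square power3_eq_cube)
  next
    case False
    then have "real N = 2 * real m + 1" "real (N - m) = real m + 1"
      unfolding m_def by (auto elim!: oddE)
    with False show ?thesis
      unfolding sum_affine_product by (simp add: field_simps power2_eq_square power3_eq_cube)
  qed
  also have "((real N ^ 3 - real N) / 6 + (if even N then (real N)\<^sup>2 / 4 else 0)) / (real N)\<^sup>2
      + (if even N then 0 else 1 / 4) = real N / 6 + 1 / 4 - 1 / (6 * real N)"
    using assms by (simp add: field_simps power2_eq_square power3_eq_cube)
  finally show ?thesis .
qed

lemma grid_point_near:
  assumes "N > 0" "0 \<le> p" "p \<le> 1"
  obtains d where "d \<in> grid N" "\<bar>p - d\<bar> \<le> 1 / (2 * real N)"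
proof -
  define k where "k = min (N - 1) (nat \<lfloor>p * real N\<rfloor>)"
  have "k < N" unfolding k_def using assms by linarith
  moreover have "real k \<le> p * real N" "p * real N \<le> real k + 1"
  proof -
    have "real (nat \<lfloor>p * real N\<rfloor>) = \<lfloor>p * real N\<rfloor>" using assms by simp
    then have "real (nat \<lfloor>p * real N\<rfloor>) \<le> p * real N"
      "p * real N < real (nat \<lfloor>p * real N\<rfloor>) + 1"
      by linarith+
    moreover have "p * real N \<le> real N" using assms by (simp add: mult_left_le_one_le)
    moreover have "real (N - 1) = real N - 1" using assms by (simp add: of_nat_diff)
    ultimately show "real k \<le> p * real N" "p * real N \<le> real k + 1"
      unfolding k_def min_def by (auto dest!: of_nat_mono[where 'a=real])
  qed
  then have "\<bar>p - grid_point N k\<bar> \<le> 1 / (2 * real N)"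
    using assms by (simp add: grid_point_def abs_le_iff field_simps)
  ultimately show ?thesis using that grid_eq_image by blast
qed

lemma nearest_rounding_dist:
  assumes "nearest_rounding N r" "N > 0" "0 \<le> p" "p \<le> 1"
  shows "\<bar>p - r p\<bar> \<le> 1 / (2 * real N)"
proof -
  obtain d where "d \<in> grid N" "\<bar>p - d\<bar> \<le> 1 / (2 * real N)"
    using grid_point_near assms(2-4) .
  moreover have "\<bar>p - r p\<bar> \<le> \<bar>p - d\<bar>"
    using assms(1) \<open>d \<in> grid N\<close> unfolding nearest_rounding_def by blast
  ultimately show ?thesis by linarith
qed

text \<open>The shifted point d' is the point of the rounding cell around d closest to 1/2, where
  p(1-p) is maximal.\<close>
lemma abs_shiftd_half_le:
  assumes "d \<in> grid N" "\<bar>p - d\<bar> \<le> 1 / (2 * real N)"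
  shows "\<bar>shiftd N d - 1 / 2\<bar> \<le> \<bar>p - 1 / 2\<bar>"
proof -
  obtain k where k: "k < N" "d = grid_point N k"
    using assms(1) unfolding grid_eq_image by blast
  have N: "real N > 0" using k by simp
  consider "2 * k + 1 < N" | "2 * k + 1 = N" | "N < 2 * k + 1" by linarith
  then show ?thesis
  proof cases
    case 1
    then have "shiftd N d = real (k + 1) / real N" by (simp add: k shiftd_grid_point)
    moreover have "real (k + 1) / real N = d + 1 / (2 * real N)" "real (k + 1) / real N \<le> 1 / 2"
      using 1 N by (simp_all add: k(2) grid_point_def field_simps)
    ultimately show ?thesis using assms(2) by (simp add: abs_le_iff)
  next
    case 3
    then have "shiftd N d = real k / real N" by (simp add: k shiftd_grid_point)
    moreover have "real k / real N = d - 1 / (2 * real N)" "1 / 2 \<le> real k / real N"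
      using 3 N by (simp_all add: k(2) grid_point_def field_simps)
    ultimately show ?thesis using assms(2) by (simp add: abs_le_iff)
  qed (simp add: k shiftd_grid_point)
qed

lemma variance_le_fd:
  assumes "d \<in> grid N" "\<bar>p - d\<bar> \<le> 1 / (2 * real N)"
  shows "p * (1 - p) \<le> fd N d"
proof -
  have "(shiftd N d - 1 / 2)\<^sup>2 \<le> (p - 1 / 2)\<^sup>2"
    using abs_shiftd_half_le[OF assms] by (simp add: abs_le_square_iff)
  then show ?thesis unfolding fd_def by (simp add: power2_eq_square algebra_simps)
qed

lemma fd_nonneg:
  assumes "d \<in> grid N"
  shows "0 \<le> fd N d"
proof -
  have "d \<in> {0..1}" using assms grid_subset_unit_interval by blast
  then have "0 \<le> d * (1 - d)" by simp
  also have "\<dots> \<le> fd N d" by (rule variance_le_fd[OF assms]) simp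
  finally show ?thesis .
qed

lemma length_play [simp]: "length (play \<sigma> \<phi> t) = t"
  by (induction t) auto

lemma take_play: "t \<le> T \<Longrightarrow> take t (play \<sigma> \<phi> T) = play \<sigma> \<phi> t"
  by (induction T) (auto simp: le_Suc_eq)

lemma nth_play: "t < T \<Longrightarrow> play \<sigma> \<phi> T ! t = (\<sigma> (play \<sigma> \<phi> t), \<phi> (play \<sigma> \<phi> t))"
  by (metis take_play Suc_leI lessI nth_take play.simps(2) length_play nth_append_length)

lemma consistent_snoc: "consistent \<sigma> (h @ [x]) \<longleftrightarrow> consistent \<sigma> h \<and> fst x = \<sigma> h"
  by (auto simp: consistent_def nth_append less_Suc_eq)

lemma consistent_play_iff: "consistent \<sigma>' (play \<sigma> \<phi> t) \<longleftrightarrow> play \<sigma>' \<phi> t = play \<sigma> \<phi> t"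
proof (induction t)
  case 0
  show ?case by (simp add: consistent_def)
next
  case (Suc t)
  then show ?case by (auto simp: consistent_snoc)
qed

lemma rain_prob_nonneg: "0 \<le> rain_prob \<tau> h"
  by (simp add: rain_prob_def)

lemma rain_prob_le_1: "rain_prob \<tau> h \<le> 1"
proof -
  have "measure_pmf.prob \<tau> {\<sigma>. consistent \<sigma> h \<and> \<sigma> h} \<le> measure_pmf.prob \<tau> {\<sigma>. consistent \<sigma> h}"
    by (rule measure_pmf.finite_measure_mono) auto
  then show ?thesis unfolding rain_prob_def by (auto simp: divide_le_eq_1 less_le)
qed

text \<open>Evaluated at a history, innovation_sum, variance_sum and forecast_count are M_d, the sum V_d
  of its conditional variances, and n(d).\<close>

definition innovation_sum :: "(history \<Rightarrow> bool) pmf \<Rightarrow> real \<Rightarrow> history \<Rightarrow> real" where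
  "innovation_sum \<tau> d h =
     (\<Sum>s<length h. if snd (h ! s) = d then of_bool (fst (h ! s)) - rain_prob \<tau> (take s h) else 0)"

definition variance_sum :: "(history \<Rightarrow> bool) pmf \<Rightarrow> real \<Rightarrow> history \<Rightarrow> real" where
  "variance_sum \<tau> d h =
     (\<Sum>s<length h. if snd (h ! s) = d
        then rain_prob \<tau> (take s h) * (1 - rain_prob \<tau> (take s h)) else 0)"

definition forecast_count :: "real \<Rightarrow> history \<Rightarrow> real" where
  "forecast_count d h = (\<Sum>s<length h. of_bool (snd (h ! s) = d))"

definition forecasts_within :: "(history \<Rightarrow> bool) pmf \<Rightarrow> real \<Rightarrow> history \<Rightarrow> bool" where
  "forecasts_within \<tau> \<delta> h \<longleftrightarrow> (\<forall>s<length h. \<bar>rain_prob \<tau> (take s h) - snd (h ! s)\<bar> \<le> \<delta>)"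

lemma innovation_sum_snoc:
  "innovation_sum \<tau> d (h @ [x]) =
     innovation_sum \<tau> d h + (if snd x = d then of_bool (fst x) - rain_prob \<tau> h else 0)"
  unfolding innovation_sum_def by (auto intro!: sum.cong simp: nth_append)

lemma variance_sum_snoc:
  "variance_sum \<tau> d (h @ [x]) =
     variance_sum \<tau> d h + (if snd x = d then rain_prob \<tau> h * (1 - rain_prob \<tau> h) else 0)"
  unfolding variance_sum_def by (auto intro!: sum.cong simp: nth_append)

lemma abs_innovation_sum_le: "\<bar>innovation_sum \<tau> d h\<bar> \<le> real (length h)"
proof -
  have "\<bar>innovation_sum \<tau> d h\<bar> \<le> (\<Sum>s<length h. 1)"
    unfolding innovation_sum_def
  proof (rule order.trans[OF sum_abs sum_mono])
    fix s
    show "\<bar>if snd (h ! s) = d then of_bool (fst (h ! s)) - rain_prob \<tau> (take s h) else 0\<bar> \<le> 1"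
      using rain_prob_nonneg[of \<tau> "take s h"] rain_prob_le_1[of \<tau> "take s h"] by auto
  qed
  then show ?thesis by simp
qed

lemma variance_sum_nonneg: "0 \<le> variance_sum \<tau> d h"
  unfolding variance_sum_def by (auto intro!: sum_nonneg simp: rain_prob_nonneg rain_prob_le_1)

lemma variance_sum_le: "variance_sum \<tau> d h \<le> real (length h)"
proof -
  have "variance_sum \<tau> d h \<le> (\<Sum>s<length h. 1)"
    unfolding variance_sum_def
    by (rule sum_mono) (auto intro: mult_le_one simp: rain_prob_nonneg rain_prob_le_1)
  then show ?thesis by simp
qed

lemma forecast_count_nonneg: "0 \<le> forecast_count d h"
  unfolding forecast_count_def by (auto intro!: sum_nonneg)

lemma sum_forecast_count_le:
  assumes "finite A"
  shows "(\<Sum>d\<in>A. forecast_count d h) \<le> real (length h)"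
proof -
  have "(\<Sum>d\<in>A. forecast_count d h) = (\<Sum>s<length h. \<Sum>d\<in>A. of_bool (snd (h ! s) = d))"
    unfolding forecast_count_def by (rule sum.swap)
  also have "\<dots> \<le> (\<Sum>s<length h. 1)"
    by (rule sum_mono) (use assms in \<open>simp add: of_bool_def sum.delta\<close>)
  finally show ?thesis by simp
qed

lemma forecast_count_le: "forecast_count d h \<le> real (length h)"
  using sum_forecast_count_le[of "{d}" h] by simp

lemma prob_cond_pmf_play_rain:
  assumes "x \<in> set_pmf \<tau>"
  shows "measure_pmf.prob (cond_pmf \<tau> {y. play x \<phi> t = play y \<phi> t}) {y. y (play x \<phi> t)} =
    rain_prob \<tau> (play x \<phi> t)"
proof -
  let ?A = "{y. play x \<phi> t = play y \<phi> t}"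
  have ne: "set_pmf \<tau> \<inter> ?A \<noteq> {}" using assms by blast
  have A_eq: "?A = {y. consistent y (play x \<phi> t)}" by (auto simp: consistent_play_iff)
  have "measure_pmf.prob (cond_pmf \<tau> ?A) {y. y (play x \<phi> t)} =
      measure_pmf.prob \<tau> (?A \<inter> {y. y (play x \<phi> t)}) / measure_pmf.prob \<tau> ?A"
    unfolding cond_pmf.rep_eq[OF ne]
    by (rule measure_uniform_measure) (simp_all add: emeasure_measure_pmf_not_zero[OF ne])
  then show ?thesis unfolding rain_prob_def A_eq by (simp add: Collect_conj_eq)
qed

lemma expectation_predictable_innovation_zero:
  fixes G :: "history \<Rightarrow> real"
  assumes bounded: "\<And>\<sigma>. \<bar>G (play \<sigma> \<phi> t)\<bar> \<le> B"
  shows "measure_pmf.expectation \<tau>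
    (\<lambda>\<sigma>. G (play \<sigma> \<phi> t) * (of_bool (\<sigma> (play \<sigma> \<phi> t)) - rain_prob \<tau> (play \<sigma> \<phi> t))) = 0"
    (is "measure_pmf.expectation \<tau> ?F = 0")
proof -
  have F_bounded: "\<bar>?F \<sigma>\<bar> \<le> B" for \<sigma>
  proof -
    let ?h = "play \<sigma> \<phi> t"
    have "\<bar>of_bool (\<sigma> ?h) - rain_prob \<tau> ?h\<bar> \<le> (1 :: real)"
      using rain_prob_nonneg[of \<tau> ?h] rain_prob_le_1[of \<tau> ?h] by auto
    then have "\<bar>?F \<sigma>\<bar> \<le> \<bar>G ?h\<bar>"
      unfolding abs_mult by (simp add: mult_left_le)
    with bounded[of \<sigma>] show ?thesis by linarith
  qed
  have cond_zero: "measure_pmf.expectation (cond_pmf \<tau> {y. play x \<phi> t = play y \<phi> t}) ?F = 0"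
    if "x \<in> set_pmf \<tau>" for x
  proof -
    let ?h = "play x \<phi> t"
    let ?C = "cond_pmf \<tau> {y. ?h = play y \<phi> t}"
    have ne: "set_pmf \<tau> \<inter> {y. ?h = play y \<phi> t} \<noteq> {}" using that by blast
    have "measure_pmf.expectation ?C ?F =
        measure_pmf.expectation ?C (\<lambda>y. G ?h * (indicator {y. y ?h} y - rain_prob \<tau> ?h))"
      by (rule integral_cong_AE)
         (auto simp: AE_measure_pmf_iff set_cond_pmf[OF ne] indicator_def)
    also have "\<dots> = G ?h * (measure_pmf.prob ?C {y. y ?h} - rain_prob \<tau> ?h)"
      by (simp add: measure_pmf.prob_space measure_pmf.integrable_const_bound[where B=1])
    also have "measure_pmf.prob ?C {y. y ?h} = rain_prob \<tau> ?h"
      by (rule prob_cond_pmf_play_rain[OF that])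
    finally show ?thesis by simp
  qed
  \<comment> \<open>\<tau> is the mixture of its conditionals given the history of the first t periods.\<close>
  have cancel: "bind_pmf \<tau> (\<lambda>x. cond_pmf \<tau> {y. play x \<phi> t = play y \<phi> t}) = \<tau>"
  proof (rule bind_cond_pmf_cancel)
    fix x y assume "play x \<phi> t = play y \<phi> t"
    then have "{y'. play x \<phi> t = play y' \<phi> t} = {x'. play x' \<phi> t = play y \<phi> t}" by auto
    then show "measure_pmf.prob \<tau> {y'. play x \<phi> t = play y' \<phi> t} =
        measure_pmf.prob \<tau> {x'. play x' \<phi> t = play y \<phi> t}" by simp
  qed blast+
  have "measure_pmf.expectation \<tau> ?F =
      measure_pmf.expectation (bind_pmf \<tau> (\<lambda>x. cond_pmf \<tau> {y. play x \<phi> t = play y \<phi> t})) ?F"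
    by (simp only: cancel)
  also have "\<dots> = measure_pmf.expectation \<tau>
      (\<lambda>x. measure_pmf.expectation (cond_pmf \<tau> {y. play x \<phi> t = play y \<phi> t}) ?F)"
    by (rule expectation_bind_pmf_bounded[OF F_bounded])
  also have "\<dots> = measure_pmf.expectation \<tau> (\<lambda>_. 0)"
    by (rule integral_cong_AE) (auto simp: AE_measure_pmf_iff cond_zero)
  finally show ?thesis by simp
qed

text \<open>The increment of M_d^2 - V_d is a predictable multiple of the innovation, so M_d^2 - V_d
  is a martingale.\<close>

lemma innovation_square_minus_variance_snoc:
  "(innovation_sum \<tau> d (h @ [(a, c)]))\<^sup>2 - variance_sum \<tau> d (h @ [(a, c)]) =
     (innovation_sum \<tau> d h)\<^sup>2 - variance_sum \<tau> d h
     + (if c = d then 2 * innovation_sum \<tau> d h + 1 - 2 * rain_prob \<tau> h else 0)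
       * (of_bool a - rain_prob \<tau> h)"
  by (cases a) (simp_all add: innovation_sum_snoc variance_sum_snoc power2_eq_square algebra_simps)

lemma innovation_sum_square_le: "(innovation_sum \<tau> d h)\<^sup>2 \<le> (real (length h))\<^sup>2"
  using abs_innovation_sum_le[of \<tau> d h] by (simp add: abs_le_square_iff[symmetric])

lemma expectation_innovation_sum_square:
  "measure_pmf.expectation \<tau> (\<lambda>\<sigma>. (innovation_sum \<tau> d (play \<sigma> \<phi> t))\<^sup>2) =
   measure_pmf.expectation \<tau> (\<lambda>\<sigma>. variance_sum \<tau> d (play \<sigma> \<phi> t))"
proof -
  let ?D = "\<lambda>t \<sigma>. (innovation_sum \<tau> d (play \<sigma> \<phi> t))\<^sup>2 - variance_sum \<tau> d (play \<sigma> \<phi> t)"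
  have D_bounded: "\<bar>?D t \<sigma>\<bar> \<le> (real t)\<^sup>2 + real t" for t \<sigma>
    using innovation_sum_square_le[of \<tau> d "play \<sigma> \<phi> t", unfolded length_play]
      variance_sum_le[of \<tau> d "play \<sigma> \<phi> t", unfolded length_play]
      variance_sum_nonneg[of \<tau> d "play \<sigma> \<phi> t"]
      zero_le_power2[of "innovation_sum \<tau> d (play \<sigma> \<phi> t)"] zero_le_power2[of "real t"]
    unfolding abs_le_iff by linarith
  have "measure_pmf.expectation \<tau> (?D t) = 0"
  proof (induction t)
    case 0
    show ?case by (simp add: innovation_sum_def variance_sum_def)
  next
    case (Suc t)
    define G where
      "G h = (if \<phi> h = d then 2 * innovation_sum \<tau> d h + 1 - 2 * rain_prob \<tau> h else 0)" for h
    let ?I = "\<lambda>\<sigma>. G (play \<sigma> \<phi> t) *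
      (of_bool (\<sigma> (play \<sigma> \<phi> t)) - rain_prob \<tau> (play \<sigma> \<phi> t))"
    have G_bounded: "\<bar>G (play \<sigma> \<phi> t)\<bar> \<le> 2 * real t + 3" for \<sigma>
      using abs_innovation_sum_le[of \<tau> d "play \<sigma> \<phi> t"]
        rain_prob_nonneg[of \<tau> "play \<sigma> \<phi> t"] rain_prob_le_1[of \<tau> "play \<sigma> \<phi> t"]
      unfolding G_def abs_le_iff length_play by auto
    have I_bounded: "\<bar>?I \<sigma>\<bar> \<le> 2 * real t + 3" for \<sigma>
    proof -
      have "\<bar>of_bool (\<sigma> (play \<sigma> \<phi> t)) - rain_prob \<tau> (play \<sigma> \<phi> t)\<bar> \<le> (1 :: real)"
        using rain_prob_nonneg[of \<tau> "play \<sigma> \<phi> t"] rain_prob_le_1[of \<tau> "play \<sigma> \<phi> t"] by auto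
      with G_bounded[of \<sigma>] show ?thesis
        unfolding abs_mult by (metis abs_ge_zero mult_left_le order_trans)
    qed
    have step: "?D (Suc t) \<sigma> = ?D t \<sigma> + ?I \<sigma>" for \<sigma>
      by (simp add: innovation_square_minus_variance_snoc G_def)
    have "measure_pmf.expectation \<tau> (?D (Suc t)) =
        measure_pmf.expectation \<tau> (?D t) + measure_pmf.expectation \<tau> ?I"
      unfolding step
      by (rule Bochner_Integration.integral_add[OF integrable_measure_pmf_bounded[OF D_bounded]
            integrable_measure_pmf_bounded[OF I_bounded]])
    also have "\<dots> = 0"
      using Suc.IH expectation_predictable_innovation_zero[where G=G, OF G_bounded] by simp
    finally show ?case .
  qed
  moreover have "integrable (measure_pmf \<tau>) (\<lambda>\<sigma>. variance_sum \<tau> d (play \<sigma> \<phi> t))"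
    by (rule integrable_measure_pmf_bounded[where B="real t"])
       (metis abs_of_nonneg variance_sum_nonneg variance_sum_le length_play)
  moreover have "integrable (measure_pmf \<tau>) (\<lambda>\<sigma>. (innovation_sum \<tau> d (play \<sigma> \<phi> t))\<^sup>2)"
    by (rule integrable_measure_pmf_bounded[where B="(real t)\<^sup>2"])
       (metis abs_power2 innovation_sum_square_le length_play)
  ultimately show ?thesis by simp
qed

lemma abs_calib_term_le:
  assumes "forecasts_within \<tau> \<delta> h"
  shows "\<bar>\<Sum>t<length h. if snd (h ! t) = d then of_bool (fst (h ! t)) - d else 0\<bar>
    \<le> \<bar>innovation_sum \<tau> d h\<bar> + \<delta> * forecast_count d h"
proof -
  let ?e = "\<lambda>t. if snd (h ! t) = d then rain_prob \<tau> (take t h) - d else 0"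
  have "(\<Sum>t<length h. if snd (h ! t) = d then of_bool (fst (h ! t)) - d else 0) =
      innovation_sum \<tau> d h + (\<Sum>t<length h. ?e t)"
    unfolding innovation_sum_def sum.distrib[symmetric] by (rule sum.cong) auto
  moreover have "\<bar>\<Sum>t<length h. ?e t\<bar> \<le> \<delta> * forecast_count d h"
  proof -
    have "\<bar>\<Sum>t<length h. ?e t\<bar> \<le> (\<Sum>t<length h. \<delta> * of_bool (snd (h ! t) = d))"
      by (rule order.trans[OF sum_abs sum_mono]) (use assms in \<open>auto simp: forecasts_within_def\<close>)
    then show ?thesis by (simp add: forecast_count_def sum_distrib_left mult.commute)
  qed
  ultimately show ?thesis by linarith
qed

lemma calib_le_innovations:
  assumes "forecasts_within \<tau> (1 / (2 * real N)) h" "length h = T"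
  shows "calib N T h \<le> (\<Sum>d\<in>grid N. \<bar>innovation_sum \<tau> d h\<bar>) / real T + 1 / (2 * real N)"
proof -
  have "calib N T h \<le> (1 / real T) *
      (\<Sum>d\<in>grid N. \<bar>innovation_sum \<tau> d h\<bar> + forecast_count d h / (2 * real N))"
    unfolding calib_def using abs_calib_term_le[OF assms(1)] assms(2)
    by (intro mult_left_mono sum_mono) auto
  also have "\<dots> = (\<Sum>d\<in>grid N. \<bar>innovation_sum \<tau> d h\<bar>) / real T
      + (1 / real T) * (\<Sum>d\<in>grid N. forecast_count d h) / (2 * real N)"
    by (simp add: sum.distrib sum_divide_distrib distrib_left mult.commute)
  also have "(1 / real T) * (\<Sum>d\<in>grid N. forecast_count d h) \<le> (1 / real T) * real T"
    using sum_forecast_count_le[OF finite_grid[of N], of h] assms(2) by (intro mult_left_mono) auto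
  also have "(1 / real T) * real T \<le> 1" by simp
  finally show ?thesis by (simp add: divide_right_mono)
qed

lemma variance_sum_le_fd_count:
  assumes "d \<in> grid N" "forecasts_within \<tau> (1 / (2 * real N)) h"
  shows "variance_sum \<tau> d h \<le> fd N d * forecast_count d h"
proof -
  have "variance_sum \<tau> d h \<le> (\<Sum>s<length h. fd N d * of_bool (snd (h ! s) = d))"
    unfolding variance_sum_def
    by (rule sum_mono)
       (use assms in \<open>auto simp: forecasts_within_def abs_minus_commute intro: variance_le_fd\<close>)
  then show ?thesis by (simp add: forecast_count_def sum_distrib_left mult.commute)
qed

lemma forecasts_within_play:
  assumes "nearest_rounding N r" "N > 0"
  shows "forecasts_within \<tau> (1 / (2 * real N)) (play \<sigma> (\<lambda>h. r (rain_prob \<tau> h)) t)"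
  unfolding forecasts_within_def
  by (auto simp: nth_play take_play nearest_rounding_dist[OF assms] rain_prob_nonneg rain_prob_le_1)

lemma expectation_abs_innovation_sum_le:
  assumes "d \<in> grid N" "N > 0" "\<And>\<sigma>. forecasts_within \<tau> (1 / (2 * real N)) (play \<sigma> \<phi> t)"
  shows "measure_pmf.expectation \<tau> (\<lambda>\<sigma>. \<bar>innovation_sum \<tau> d (play \<sigma> \<phi> t)\<bar>) \<le>
    real N * fd N d
      + measure_pmf.expectation \<tau> (\<lambda>\<sigma>. forecast_count d (play \<sigma> \<phi> t)) / (4 * real N)"
proof -
  let ?n = "measure_pmf.expectation \<tau> (\<lambda>\<sigma>. forecast_count d (play \<sigma> \<phi> t))"
  have "(measure_pmf.expectation \<tau> (\<lambda>\<sigma>. \<bar>innovation_sum \<tau> d (play \<sigma> \<phi> t)\<bar>))\<^sup>2 \<le>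
      measure_pmf.expectation \<tau> (\<lambda>\<sigma>. (innovation_sum \<tau> d (play \<sigma> \<phi> t))\<^sup>2)"
    by (rule expectation_abs_squared_le[where B="real t"]) (metis abs_innovation_sum_le length_play)
  also have "\<dots> = measure_pmf.expectation \<tau> (\<lambda>\<sigma>. variance_sum \<tau> d (play \<sigma> \<phi> t))"
    by (rule expectation_innovation_sum_square)
  also have "\<dots> \<le> measure_pmf.expectation \<tau> (\<lambda>\<sigma>. fd N d * forecast_count d (play \<sigma> \<phi> t))"
  proof (rule integral_mono')
    show "integrable (measure_pmf \<tau>) (\<lambda>\<sigma>. fd N d * forecast_count d (play \<sigma> \<phi> t))"
      by (rule integrable_measure_pmf_bounded[where B="fd N d * real t"])
         (metis abs_mult abs_of_nonneg fd_nonneg[OF assms(1)] forecast_count_nonneg forecast_count_le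
            length_play mult_left_mono)
  qed (use assms fd_nonneg forecast_count_nonneg variance_sum_le_fd_count in auto)
  also have "\<dots> = fd N d * ?n" by simp
  also have "\<dots> \<le> (real N * fd N d + ?n / (4 * real N))\<^sup>2"
  proof -
    have "fd N d * ?n = 4 * (real N * fd N d) * (?n / (4 * real N))" using assms(2) by simp
    also have "\<dots> \<le> (real N * fd N d + ?n / (4 * real N))\<^sup>2"
      by (rule four_mult_le_add_square)
    finally show ?thesis .
  qed
  finally have square_le:
    "(measure_pmf.expectation \<tau> (\<lambda>\<sigma>. \<bar>innovation_sum \<tau> d (play \<sigma> \<phi> t)\<bar>))\<^sup>2
      \<le> (real N * fd N d + ?n / (4 * real N))\<^sup>2" .
  have "0 \<le> ?n" by (rule integral_nonneg_AE) (simp add: forecast_count_nonneg)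
  then have "0 \<le> real N * fd N d + ?n / (4 * real N)"
    using fd_nonneg[OF assms(1)] by simp
  with square_le show ?thesis by (rule power2_le_imp_le)
qed

lemma expectation_calib_le:
  assumes N: "N > 0"
    and T: "4 * (real N)\<^sup>2 * (\<Sum>d\<in>grid N. fd N d) \<le> real T"
    and r: "nearest_rounding N r"
  shows "measure_pmf.expectation \<tau> (\<lambda>\<sigma>. calib N T (play \<sigma> (\<lambda>h. r (rain_prob \<tau> h)) T))
    \<le> 1 / real N"
proof (cases "T = 0")
  case True
  then show ?thesis by (simp add: calib_def)
next
  case False
  define \<phi> where "\<phi> = (\<lambda>h. r (rain_prob \<tau> h))"
  define F where "F = (\<Sum>d\<in>grid N. fd N d)"
  let ?M = "\<lambda>d \<sigma>. \<bar>innovation_sum \<tau> d (play \<sigma> \<phi> T)\<bar>"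
  let ?n = "\<lambda>d. measure_pmf.expectation \<tau> (\<lambda>\<sigma>. forecast_count d (play \<sigma> \<phi> T))"
  have within: "forecasts_within \<tau> (1 / (2 * real N)) (play \<sigma> \<phi> T)" for \<sigma>
    unfolding \<phi>_def by (rule forecasts_within_play[OF r N])
  have M_integrable: "integrable (measure_pmf \<tau>) (?M d)" for d
    by (rule integrable_measure_pmf_bounded[where B="real T"])
       (metis abs_innovation_sum_le abs_abs length_play)
  have n_integrable: "integrable (measure_pmf \<tau>) (\<lambda>\<sigma>. forecast_count d (play \<sigma> \<phi> T))" for d
    by (rule integrable_measure_pmf_bounded[where B="real T"])
       (metis abs_of_nonneg forecast_count_nonneg forecast_count_le length_play)
  have sum_n: "(\<Sum>d\<in>grid N. ?n d) \<le> real T"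
  proof -
    have "(\<Sum>d\<in>grid N. ?n d) =
        measure_pmf.expectation \<tau> (\<lambda>\<sigma>. \<Sum>d\<in>grid N. forecast_count d (play \<sigma> \<phi> T))"
      by (simp add: integral_sum n_integrable)
    also have "\<dots> \<le> measure_pmf.expectation \<tau> (\<lambda>_. real T)"
      by (rule integral_mono') (auto intro: order.trans[OF sum_forecast_count_le[OF finite_grid]])
    finally show ?thesis by (simp add: measure_pmf.prob_space)
  qed
  have "measure_pmf.expectation \<tau> (\<lambda>\<sigma>. calib N T (play \<sigma> \<phi> T)) \<le>
      measure_pmf.expectation \<tau> (\<lambda>\<sigma>. (\<Sum>d\<in>grid N. ?M d \<sigma>) / real T + 1 / (2 * real N))"
    by (rule integral_mono')
       (auto intro!: Bochner_Integration.integrable_add integrable_divide integrable_sum M_integrable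
          measure_pmf.integrable_const calib_le_innovations[OF within] sum_nonneg)
  also have "\<dots> = (\<Sum>d\<in>grid N. measure_pmf.expectation \<tau> (?M d)) / real T + 1 / (2 * real N)"
    by (simp add: integral_sum M_integrable integrable_sum measure_pmf.prob_space)
  also have "\<dots> \<le>
      (\<Sum>d\<in>grid N. real N * fd N d + ?n d / (4 * real N)) / real T + 1 / (2 * real N)"
    using expectation_abs_innovation_sum_le[OF _ N within]
    by (intro add_right_mono divide_right_mono sum_mono) auto
  also have "\<dots> =
      (real N * F + (\<Sum>d\<in>grid N. ?n d) / (4 * real N)) / real T + 1 / (2 * real N)"
    by (simp add: F_def sum.distrib sum_distrib_left sum_divide_distrib)
  also have "\<dots> \<le> (real N * F + real T / (4 * real N)) / real T + 1 / (2 * real N)"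
    using sum_n by (intro add_right_mono divide_right_mono add_left_mono) auto
  also have "\<dots> \<le> 1 / real N"
    using T N False unfolding F_def[symmetric] by (simp add: field_simps power2_eq_square)
  finally show ?thesis unfolding \<phi>_def .
qed

theorem mainTheorem5:
  fixes N T :: nat
  assumes "N > 0"
  shows "(\<Sum>d\<in>grid N. fd N d) = real N / 6 + 1 / 4 - 1 / (6 * real N)
       \<and> (real T \<ge> 2/3 * real N ^ 3 + real N ^ 2 - 2/3 * real N \<longrightarrow>
           (\<forall>(\<tau> :: (history \<Rightarrow> bool) pmf) (r :: real \<Rightarrow> real). nearest_rounding N r \<longrightarrow>
              measure_pmf.expectation \<tau>
                (\<lambda>\<sigma>. calib N T (play \<sigma> (\<lambda>h. r (rain_prob \<tau> h)) T)) \<le> 1 / real N))"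
proof -
  have sum_fd: "(\<Sum>d\<in>grid N. fd N d) = real N / 6 + 1 / 4 - 1 / (6 * real N)"
    using assms by (rule sum_fd_grid)
  have "4 * (real N)\<^sup>2 * (\<Sum>d\<in>grid N. fd N d) = 2/3 * real N ^ 3 + real N ^ 2 - 2/3 * real N"
    unfolding sum_fd using assms by (simp add: field_simps power2_eq_square power3_eq_cube)
  then show ?thesis
    using sum_fd expectation_calib_le[OF assms] by auto
qed

end
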